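(* Let $\mathcal{F}$ be a finite forest with at least one vertex and without isolated vertices. Then $\mathcal{NC}(\mathcal{F})$ is vertex decomposable if and only if $\mathcal{F}$ is connected and has at most two internal vertices.
   Context: An internal vertex of a forest is a vertex of degree greater than $1$. For a finite simple graph $H$, the non-cover complex $\mathcal{NC}(H)$ is the simplicial complex whose simplices are the subsets $S\subseteq V(H)$ such that $V(H)\setminus S$ contains both endpoints of some edge of $H$. For a simplicial complex $K$ and a vertex $v$, $\mathrm{lk}(v,K)=\{\tau\in K: v\notin\tau,\ \tau\cup\{v\}\in K\}$ and $\mathrm{del}(v,K)=\{\tau\in K: v\notin\tau\}$. A simplicial complex $K$ is vertex decomposable if $K$ is a simplex (the set of all subsets of a finite set, including $\{\emptyset\}$), or $K$ contains a vertex $v$ such that (i) both $\mathrm{lk}(v,K)$ and $\mathrm{del}(v,K)$ are vertex decomposable, and (ii) every facet (maximal simplex) of $\mathrm{del}(v,K)$ is a facet of $K$. *)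

theory Defs
  imports Main
begin

definition simple_graph :: "'a set \<Rightarrow> 'a set set \<Rightarrow> bool" where
  "simple_graph V E \<longleftrightarrow> finite V \<and> (\<forall>e\<in>E. e \<subseteq> V \<and> card e = 2)"

definition adj :: "'a set set \<Rightarrow> 'a \<Rightarrow> 'a \<Rightarrow> bool" where
  "adj E u v \<longleftrightarrow> {u, v} \<in> E"

definition degree :: "'a set set \<Rightarrow> 'a \<Rightarrow> nat" where
  "degree E v = card {e \<in> E. v \<in> e}"

definition internal_vertices :: "'a set \<Rightarrow> 'a set set \<Rightarrow> 'a set" where
  "internal_vertices V E = {v \<in> V. degree E v > 1}"

definition no_isolated_vertices :: "'a set \<Rightarrow> 'a set set \<Rightarrow> bool" where
  "no_isolated_vertices V E \<longleftrightarrow> (\<forall>v\<in>V. degree E v \<ge> 1)"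

definition connected_graph :: "'a set \<Rightarrow> 'a set set \<Rightarrow> bool" where
  "connected_graph V E \<longleftrightarrow> (\<forall>u\<in>V. \<forall>v\<in>V. (adj E)\<^sup>*\<^sup>* u v)"

definition is_cycle :: "'a set \<Rightarrow> 'a set set \<Rightarrow> 'a list \<Rightarrow> bool" where
  "is_cycle V E cs \<longleftrightarrow> length cs \<ge> 3 \<and> distinct cs \<and> set cs \<subseteq> V \<and>
     (\<forall>i < length cs - 1. adj E (cs ! i) (cs ! (i + 1))) \<and>
     adj E (last cs) (hd cs)"

definition forest :: "'a set \<Rightarrow> 'a set set \<Rightarrow> bool" where
  "forest V E \<longleftrightarrow> simple_graph V E \<and> (\<nexists>cs. is_cycle V E cs)"

definition non_cover_complex :: "'a set \<Rightarrow> 'a set set \<Rightarrow> 'a set set" where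
  "non_cover_complex V E = {S. S \<subseteq> V \<and> (\<exists>e\<in>E. e \<subseteq> V - S)}"

definition lk :: "'a \<Rightarrow> 'a set set \<Rightarrow> 'a set set" where
  "lk v K = {\<tau> \<in> K. v \<notin> \<tau> \<and> insert v \<tau> \<in> K}"

definition del :: "'a \<Rightarrow> 'a set set \<Rightarrow> 'a set set" where
  "del v K = {\<tau> \<in> K. v \<notin> \<tau>}"

definition facet :: "'a set \<Rightarrow> 'a set set \<Rightarrow> bool" where
  "facet F K \<longleftrightarrow> F \<in> K \<and> \<not> (\<exists>G\<in>K. F \<subset> G)"

inductive vertex_decomposable :: "'a set set \<Rightarrow> bool" where
  simplex: "finite A \<Longrightarrow> vertex_decomposable (Pow A)"
| decomp: "{v} \<in> K \<Longrightarrow> vertex_decomposable (lk v K) \<Longrightarrow>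
     vertex_decomposable (del v K) \<Longrightarrow>
     (\<forall>F. facet F (del v K) \<longrightarrow> facet F K) \<Longrightarrow> vertex_decomposable K"

end

(* A pure vertex decomposable complex is strongly connected, and so are all its vertex links:
   induct on the decomposition, using that a facet through a shedding vertex v is one
   adjacency step away from a facet of the deletion of v.

   The facets of NC(H) are the complements V - e of the edges e, and two of them are
   adjacent exactly when the edges meet. Hence NC(H) is strongly connected iff H (having no
   isolated vertices) is connected. The link of a vertex x is NC(H - x). If a connected forest
   has three internal vertices, some x has two internal neighbours y, z; in H - x both still
   carry edges but lie in different components, so the link of x is not strongly connected.

   Conversely, a connected graph with at most two internal vertices is an edge, a star or a
   double star, and their non-cover complexes are decomposed by shedding leaves of the star,
   respectively one centre of the double star. *)

theory Submission
  imports Defs "HOL-Library.Transitive_Closure_Table"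
begin

section \<open>Vertex decomposable complexes are strongly connected\<close>

definition down_closed :: "'a set set \<Rightarrow> bool" where
  "down_closed K \<longleftrightarrow> (\<forall>S\<in>K. \<forall>T. T \<subseteq> S \<longrightarrow> T \<in> K)"

definition pure :: "nat \<Rightarrow> 'a set set \<Rightarrow> bool" where
  "pure d K \<longleftrightarrow> (\<forall>F. facet F K \<longrightarrow> card F = d)"

definition facet_adjacent :: "'a set set \<Rightarrow> 'a set \<Rightarrow> 'a set \<Rightarrow> bool" where
  "facet_adjacent K F G \<longleftrightarrow> facet F K \<and> facet G K \<and> card (F - G) \<le> 1"

definition strongly_connected :: "'a set set \<Rightarrow> bool" where
  "strongly_connected K \<longleftrightarrow>
     (\<forall>F G. facet F K \<longrightarrow> facet G K \<longrightarrow> (facet_adjacent K)\<^sup>*\<^sup>* F G)"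

definition shedding :: "'a set set \<Rightarrow> 'a \<Rightarrow> bool" where
  "shedding K v \<longleftrightarrow> (\<forall>F. facet F (del v K) \<longrightarrow> facet F K)"

lemma vertex_decomposableI:
  "{v} \<in> K \<Longrightarrow> vertex_decomposable (lk v K) \<Longrightarrow> vertex_decomposable (del v K) \<Longrightarrow>
   shedding K v \<Longrightarrow> vertex_decomposable K"
  unfolding shedding_def by (rule vertex_decomposable.decomp)

lemma down_closedD: "down_closed K \<Longrightarrow> S \<in> K \<Longrightarrow> T \<subseteq> S \<Longrightarrow> T \<in> K"
  unfolding down_closed_def by blast

lemma finite_face: "finite K \<Longrightarrow> down_closed K \<Longrightarrow> S \<in> K \<Longrightarrow> finite S"
  using finite_subset[of "Pow S" K] down_closedD[of K S] by auto

lemma finite_facet: "finite K \<Longrightarrow> down_closed K \<Longrightarrow> facet F K \<Longrightarrow> finite F"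
  unfolding facet_def by (simp add: finite_face)

lemma face_subset_facet:
  assumes "finite K" "S \<in> K"
  obtains F where "facet F K" "S \<subseteq> F"
proof -
  have "finite {G\<in>K. S \<subseteq> G}" "{G\<in>K. S \<subseteq> G} \<noteq> {}" using assms by auto
  from finite_has_maximal[OF this] obtain F where F: "F \<in> {G\<in>K. S \<subseteq> G}"
    and max: "\<And>G. G \<in> {G\<in>K. S \<subseteq> G} \<Longrightarrow> F \<le> G \<Longrightarrow> F = G" by metis
  have "facet F K" unfolding facet_def
  proof (intro conjI notI)
    show "F \<in> K" using F by simp
    assume "\<exists>G\<in>K. F \<subset> G"
    then show False using F max by blast
  qed
  with F show thesis using that by blast
qed

lemma down_closed_lk: "down_closed K \<Longrightarrow> down_closed (lk x K)"
  unfolding down_closed_def lk_def by (auto dest: insert_mono[of _ _ x])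

lemma down_closed_del: "down_closed K \<Longrightarrow> down_closed (del x K)"
  unfolding down_closed_def del_def by blast

lemma facet_insert_if_facet_lk:
  assumes "down_closed K" "facet H (lk x K)"
  shows "facet (insert x H) K" "x \<notin> H"
proof -
  have H: "x \<notin> H" "insert x H \<in> K" using assms(2) unfolding facet_def lk_def by auto
  have "\<not> insert x H \<subset> G" if G: "G \<in> K" for G
  proof
    assume HG: "insert x H \<subset> G"
    then have "insert x (G - {x}) = G" by blast
    moreover have "G - {x} \<in> K" using down_closedD[OF assms(1) G] by blast
    ultimately have "G - {x} \<in> lk x K" using G unfolding lk_def by simp
    moreover have "H \<subset> G - {x}" using HG H(1) by blast
    ultimately show False using assms(2) unfolding facet_def by blast
  qed
  then show "facet (insert x H) K" "x \<notin> H" using H unfolding facet_def by auto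
qed

lemma facet_lk_if_facet:
  assumes "down_closed K" "facet F K" "x \<in> F"
  shows "facet (F - {x}) (lk x K)"
proof -
  have F: "F \<in> K" using assms(2) unfolding facet_def by blast
  moreover have "insert x (F - {x}) = F" using assms(3) by blast
  moreover have "F - {x} \<in> K" using down_closedD[OF assms(1) F] by blast
  ultimately have "F - {x} \<in> lk x K" unfolding lk_def by simp
  moreover have "\<not> F - {x} \<subset> T" if "T \<in> lk x K" for T
  proof
    assume "F - {x} \<subset> T"
    then have "F \<subset> insert x T" "insert x T \<in> K" using that assms(3) unfolding lk_def by auto
    then show False using assms(2) unfolding facet_def by blast
  qed
  ultimately show ?thesis unfolding facet_def by blast
qed

lemma facet_del_if_facet: "facet F K \<Longrightarrow> v \<notin> F \<Longrightarrow> facet F (del v K)"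
  unfolding facet_def del_def by blast

lemma facet_Pow_iff: "facet F (Pow A) \<longleftrightarrow> F = A"
  unfolding facet_def by blast

lemma lk_Pow: "lk x (Pow A) = (if x \<in> A then Pow (A - {x}) else {})"
  unfolding lk_def by auto

lemma pure_lk:
  assumes "finite K" "down_closed K" "pure d K"
  shows "pure (d - 1) (lk x K)"
  unfolding pure_def
proof (intro allI impI)
  fix H assume "facet H (lk x K)"
  note xH = facet_insert_if_facet_lk[OF assms(2) this]
  then have "finite H" using finite_facet[OF assms(1,2)] by (metis finite_insert)
  moreover have "card (insert x H) = d" using xH(1) assms(3) unfolding pure_def by blast
  ultimately show "card H = d - 1" using xH(2) by simp
qed

lemma pure_del: "pure d K \<Longrightarrow> shedding K v \<Longrightarrow> pure d (del v K)"
  unfolding pure_def shedding_def by blast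

lemma lk_del_commute: "x \<noteq> v \<Longrightarrow> lk x (del v K) = del v (lk x K)"
  unfolding lk_def del_def by auto

lemma shedding_lk:
  assumes "down_closed K" "shedding K v" "x \<noteq> v"
  shows "shedding (lk x K) v"
  unfolding shedding_def
proof (intro allI impI)
  fix T assume "facet T (del v (lk x K))"
  then have "facet T (lk x (del v K))" by (simp add: lk_del_commute assms(3))
  note xT = facet_insert_if_facet_lk[OF down_closed_del[OF assms(1)] this]
  then have "facet (insert x T) K" using assms(2) unfolding shedding_def by blast
  from facet_lk_if_facet[OF assms(1) this insertI1] show "facet T (lk x K)" using xT(2) by simp
qed

lemma shedding_if_no_cone:
  assumes "down_closed K" "\<And>F. facet F (del v K) \<Longrightarrow> insert v F \<notin> K"
  shows "shedding K v"
  unfolding shedding_def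
proof (intro allI impI)
  fix F assume F: "facet F (del v K)"
  have "\<not> F \<subset> G" if "G \<in> K" for G
  proof
    assume "F \<subset> G"
    show False
    proof (cases "v \<in> G")
      case True
      then have "insert v F \<in> K" using down_closedD[OF assms(1) that] \<open>F \<subset> G\<close> by blast
      then show False using assms(2)[OF F] by blast
    next
      case False
      then have "G \<in> del v K" using that by (simp add: del_def)
      then show False using F \<open>F \<subset> G\<close> unfolding facet_def by blast
    qed
  qed
  then show "facet F K" using F unfolding facet_def del_def by blast
qed

lemma facet_adjacent_sym:
  assumes "finite K" "down_closed K" "pure d K" "facet_adjacent K F G"
  shows "facet_adjacent K G F"
proof -
  have FG: "facet F K" "facet G K" "card (F - G) \<le> 1"
    using assms(4) unfolding facet_adjacent_def by auto
  then have "finite F" "finite G" "card F = card G"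
    using finite_facet[OF assms(1,2)] assms(3) unfolding pure_def by auto
  then have "card (G - F) = card (F - G)"
    by (metis Int_commute card_Diff_subset_Int finite_Int)
  then show ?thesis using FG unfolding facet_adjacent_def by auto
qed

text \<open>G - {v} is a face of the deletion but, by shedding, not a facet of it; a facet of the
  deletion above it is a facet of K of the same size.\<close>

lemma facet_adjacent_to_facet_del:
  assumes fin: "finite K" and dc: "down_closed K" and pure: "pure d K"
    and sh: "shedding K v" and G: "facet G K" and vG: "v \<in> G"
  obtains F where "facet F (del v K)" "facet_adjacent K F G"
proof -
  have GK: "G \<in> K" using G unfolding facet_def by simp
  have finG: "finite G" using finite_facet[OF fin dc G] .
  have "G - {v} \<in> del v K" using down_closedD[OF dc GK] unfolding del_def by auto
  moreover have "\<not> facet (G - {v}) K" using vG GK unfolding facet_def by blast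
  then have "\<not> facet (G - {v}) (del v K)" using sh unfolding shedding_def by blast
  ultimately obtain T where T: "T \<in> del v K" "G - {v} \<subset> T" unfolding facet_def by blast
  obtain F where F: "facet F (del v K)" "T \<subseteq> F"
    using face_subset_facet[of "del v K" T] fin T unfolding del_def by auto
  have FK: "facet F K" using F sh unfolding shedding_def by blast
  have "finite F" "card F = card G"
    using FK G finite_facet[OF fin dc] pure unfolding pure_def by auto
  moreover have "G - {v} \<subseteq> F" using F T by blast
  ultimately have "card (F - (G - {v})) \<le> 1"
    using finG vG by (simp add: card_Diff_subset)
  moreover have "card (F - G) \<le> card (F - (G - {v}))"
    using \<open>finite F\<close> by (intro card_mono) auto
  ultimately have "card (F - G) \<le> 1" by linarith
  then have "facet_adjacent K F G" using FK G unfolding facet_adjacent_def by blast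
  with F(1) show thesis by (rule that)
qed

lemma strongly_connected_if_del:
  assumes fin: "finite K" and dc: "down_closed K" and pure: "pure d K"
    and sc: "strongly_connected (del v K)" and sh: "shedding K v"
  shows "strongly_connected K"
proof -
  have sym: "symp (facet_adjacent K)"
    using facet_adjacent_sym[OF fin dc pure] by (blast intro: sympI)
  have del_step: "facet_adjacent K F G" if "facet_adjacent (del v K) F G" for F G
    using that sh unfolding facet_adjacent_def shedding_def by blast
  have del_path: "(facet_adjacent K)\<^sup>*\<^sup>* F G"
    if "facet F (del v K)" "facet G (del v K)" for F G
  proof -
    have "(facet_adjacent (del v K))\<^sup>*\<^sup>* F G"
      using sc that unfolding strongly_connected_def by blast
    then show ?thesis by (rule mono_rtranclp[rule_format, OF del_step, rotated])
  qed
  have to_del: "\<exists>F'. facet F' (del v K) \<and> (facet_adjacent K)\<^sup>*\<^sup>* F F'" if F: "facet F K" for F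
  proof (cases "v \<in> F")
    case True
    then obtain F' where "facet F' (del v K)" "facet_adjacent K F' F"
      using facet_adjacent_to_facet_del[OF fin dc pure sh F] by blast
    then show ?thesis using sym by (blast dest: sympD)
  next
    case False
    then show ?thesis using facet_del_if_facet[OF F] by blast
  qed
  show ?thesis unfolding strongly_connected_def
  proof (intro allI impI)
    fix F G assume "facet F K" "facet G K"
    then obtain F' G' where F': "facet F' (del v K)" "(facet_adjacent K)\<^sup>*\<^sup>* F F'"
      and G': "facet G' (del v K)" "(facet_adjacent K)\<^sup>*\<^sup>* G G'"
      using to_del by meson
    note F'(2)
    also have "(facet_adjacent K)\<^sup>*\<^sup>* F' G'" using del_path F'(1) G'(1) .
    also have "(facet_adjacent K)\<^sup>*\<^sup>* G' G" using G'(2) sympD[OF symp_rtranclp[OF sym]] by blast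
    finally show "(facet_adjacent K)\<^sup>*\<^sup>* F G" .
  qed
qed

lemma strongly_connected_if_vertex_decomposable:
  assumes "vertex_decomposable K" "finite K" "down_closed K" "pure d K"
  shows "strongly_connected K \<and> (\<forall>x. strongly_connected (lk x K))"
  using assms
proof (induction K arbitrary: d rule: vertex_decomposable.induct)
  case (simplex A)
  have "strongly_connected (Pow B)" for B :: "'a set"
    unfolding strongly_connected_def facet_Pow_iff by simp
  moreover have "strongly_connected {}" unfolding strongly_connected_def facet_def by simp
  ultimately show ?case by (auto simp: lk_Pow)
next
  case (decomp v K)
  txt \<open>For x \<noteq> v the link of x is strongly connected because v is also a shedding vertex
    of it, with deletion the link of x in the deletion of v: this is why links are part of
    the induction.\<close>
  have sh: "shedding K v" using decomp.hyps(4) unfolding shedding_def by blast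
  have fin: "finite (lk x K)" "finite (del x K)" for x
    using decomp.prems(1) unfolding lk_def del_def by auto
  have del: "strongly_connected (del v K) \<and> (\<forall>x. strongly_connected (lk x (del v K)))"
    using decomp.IH(2) fin down_closed_del[OF decomp.prems(2)] pure_del[OF decomp.prems(3) sh]
    by blast
  have "strongly_connected (lk x K)" for x
  proof (cases "x = v")
    case True
    then show ?thesis
      using decomp.IH(1) fin down_closed_lk[OF decomp.prems(2)] pure_lk[OF decomp.prems] by blast
  next
    case False
    have "strongly_connected (del v (lk x K))" using del lk_del_commute[OF False] by metis
    then show ?thesis
      using strongly_connected_if_del[OF fin(1) down_closed_lk[OF decomp.prems(2)]
          pure_lk[OF decomp.prems] _ shedding_lk[OF decomp.prems(2) sh False]] by blast
  qed
  then show ?case using strongly_connected_if_del[OF decomp.prems] del sh by blast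
qed

section \<open>Simple graphs and their non-cover complexes\<close>

abbreviation NC :: "'a set \<Rightarrow> 'a set set \<Rightarrow> 'a set set" where
  "NC \<equiv> non_cover_complex"

lemma simple_graph_finite_edges: "simple_graph V E \<Longrightarrow> finite E"
  unfolding simple_graph_def by (meson PowI finite_Pow_iff finite_subset subsetI)

lemma simple_graph_edge_eq:
  assumes "simple_graph V E" "e \<in> E" "c \<in> e"
  obtains l where "l \<in> V" "l \<noteq> c" "e = {c, l}"
proof -
  have "card e = 2" "e \<subseteq> V" using assms unfolding simple_graph_def by auto
  then obtain x y where "e = {x, y}" "x \<noteq> y" by (auto simp: card_2_iff)
  then show thesis using that \<open>e \<subseteq> V\<close> assms(3) by (auto simp: insert_commute)
qed

lemma simple_graph_adjD:
  assumes "simple_graph V E" "adj E u w"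
  shows "u \<in> V" "w \<in> V" "u \<noteq> w"
proof -
  have "{u, w} \<in> E" using assms(2) unfolding adj_def .
  then have "{u, w} \<subseteq> V" "card {u, w} = 2" using assms(1) unfolding simple_graph_def by auto
  then show "u \<in> V" "w \<in> V" "u \<noteq> w" by (auto simp: card_insert_if split: if_splits)
qed

lemma adj_sym: "adj E u w \<Longrightarrow> adj E w u"
  unfolding adj_def by (simp add: insert_commute)

lemma simple_graph_del_vertex: "simple_graph V E \<Longrightarrow> simple_graph (V - {v}) {e\<in>E. v \<notin> e}"
  unfolding simple_graph_def by auto

lemma adj_del_vertexD: "adj {e\<in>E. v \<notin> e} u w \<Longrightarrow> adj E u w \<and> u \<noteq> v \<and> w \<noteq> v"
  unfolding adj_def by auto

lemma internal_vertices_iff: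
  assumes "simple_graph V E"
  shows "v \<in> internal_vertices V E \<longleftrightarrow> v \<in> V \<and> (\<exists>u w. u \<noteq> w \<and> adj E v u \<and> adj E v w)"
proof -
  have fin: "finite {e\<in>E. v \<in> e}" using simple_graph_finite_edges[OF assms] by simp
  have "1 < card {e\<in>E. v \<in> e} \<longleftrightarrow> (\<exists>u w. u \<noteq> w \<and> adj E v u \<and> adj E v w)"
  proof
    assume "1 < card {e\<in>E. v \<in> e}"
    then obtain e f where ef: "e \<in> E" "f \<in> E" "v \<in> e" "v \<in> f" "e \<noteq> f"
      using card_le_Suc0_iff_eq[OF fin] by auto
    obtain u w where "e = {v, u}" "f = {v, w}"
      using simple_graph_edge_eq[OF assms] ef by metis
    then show "\<exists>u w. u \<noteq> w \<and> adj E v u \<and> adj E v w" using ef unfolding adj_def by blast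
  next
    assume "\<exists>u w. u \<noteq> w \<and> adj E v u \<and> adj E v w"
    then obtain u w where "u \<noteq> w" "{v, u} \<in> E" "{v, w} \<in> E" unfolding adj_def by blast
    moreover have "{v, u} \<noteq> {v, w}" using \<open>u \<noteq> w\<close> by (auto simp: doubleton_eq_iff)
    ultimately show "1 < card {e\<in>E. v \<in> e}"
      using card_le_Suc0_iff_eq[OF fin] by force
  qed
  then show ?thesis unfolding internal_vertices_def degree_def by blast
qed

lemma edge_at_vertex:
  assumes "no_isolated_vertices V E" "v \<in> V"
  obtains e where "e \<in> E" "v \<in> e"
proof -
  have "degree E v \<noteq> 0" using assms unfolding no_isolated_vertices_def by fastforce
  then have "{e\<in>E. v \<in> e} \<noteq> {}" unfolding degree_def by (metis card.empty)
  then show thesis using that by blast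
qed

lemma finite_NC: "finite W \<Longrightarrow> finite (NC W E)"
  unfolding non_cover_complex_def by (rule finite_subset[of _ "Pow W"]) auto

lemma down_closed_NC: "down_closed (NC W E)"
  unfolding down_closed_def non_cover_complex_def by blast

lemma NC_single_edge: "e \<subseteq> W \<Longrightarrow> NC W {e} = Pow (W - e)"
  unfolding non_cover_complex_def by auto

lemma lk_NC:
  assumes "v \<in> W"
  shows "lk v (NC W E) = NC (W - {v}) {e\<in>E. v \<notin> e}"
proof (intro set_eqI iffI)
  fix t assume "t \<in> lk v (NC W E)"
  then have "t \<subseteq> W - {v}" "\<exists>e\<in>E. e \<subseteq> W - insert v t"
    unfolding lk_def non_cover_complex_def by auto
  then show "t \<in> NC (W - {v}) {e\<in>E. v \<notin> e}" unfolding non_cover_complex_def by blast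
next
  fix t assume "t \<in> NC (W - {v}) {e\<in>E. v \<notin> e}"
  then obtain e where "t \<subseteq> W - {v}" "e \<in> E" "e \<subseteq> W - insert v t"
    unfolding non_cover_complex_def by blast
  then show "t \<in> lk v (NC W E)" using assms unfolding lk_def non_cover_complex_def by blast
qed

lemma facet_NC_iff:
  assumes "simple_graph W E"
  shows "facet F (NC W E) \<longleftrightarrow> (\<exists>e\<in>E. F = W - e)"
proof
  assume F: "facet F (NC W E)"
  then obtain e where e: "e \<in> E" "e \<subseteq> W - F" "F \<subseteq> W"
    unfolding facet_def non_cover_complex_def by auto
  have "e \<subseteq> W" using e(1) assms unfolding simple_graph_def by blast
  then have "W - e \<in> NC W E" using e(1) unfolding non_cover_complex_def by blast
  moreover have "F \<subseteq> W - e" using e by auto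
  ultimately have "F = W - e" using F unfolding facet_def by blast
  then show "\<exists>e\<in>E. F = W - e" using e by blast
next
  assume "\<exists>e\<in>E. F = W - e"
  then obtain e where e: "e \<in> E" "F = W - e" by blast
  have eW: "e \<subseteq> W" "card e = 2" "finite e"
    using e assms finite_subset unfolding simple_graph_def by (auto simp: card_ge_0_finite)
  have "F \<in> NC W E" using e eW unfolding non_cover_complex_def by auto
  moreover have "\<not> F \<subset> S" if S: "S \<in> NC W E" for S
  proof
    assume "F \<subset> S"
    obtain f where f: "f \<in> E" "f \<subseteq> W - S"
      using S unfolding non_cover_complex_def by blast
    then have "f \<subset> e" using \<open>F \<subset> S\<close> e S unfolding non_cover_complex_def by auto
    then have "card f < 2" using eW psubset_card_mono by metis
    then show False using f assms unfolding simple_graph_def by auto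
  qed
  ultimately show "facet F (NC W E)" unfolding facet_def by blast
qed

lemma pure_NC:
  assumes "simple_graph W E"
  shows "pure (card W - 2) (NC W E)"
  unfolding pure_def
proof (intro allI impI)
  fix F assume "facet F (NC W E)"
  then obtain e where "e \<in> E" "F = W - e" using facet_NC_iff[OF assms] by blast
  moreover have "e \<subseteq> W" "card e = 2" "finite W"
    using \<open>e \<in> E\<close> assms unfolding simple_graph_def by auto
  ultimately show "card F = card W - 2" by (simp add: card_Diff_subset finite_subset)
qed

lemma facet_adjacent_NC_edges_meet:
  assumes "simple_graph W E" "e \<in> E" "f \<in> E" "facet_adjacent (NC W E) (W - e) (W - f)"
  shows "e \<inter> f \<noteq> {}"
proof
  assume "e \<inter> f = {}"
  have "f \<subseteq> W" "card f = 2" using assms(1,3) unfolding simple_graph_def by auto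
  then have "(W - e) - (W - f) = f" using \<open>e \<inter> f = {}\<close> by blast
  then show False using assms(4) \<open>card f = 2\<close> unfolding facet_adjacent_def by simp
qed

lemma rtranclp_adj_edge:
  assumes "simple_graph V E" "e \<in> E" "z \<in> e" "z' \<in> e" "(adj E)\<^sup>*\<^sup>* u z"
  shows "(adj E)\<^sup>*\<^sup>* u z'"
proof -
  obtain l where "e = {z, l}" using simple_graph_edge_eq[OF assms(1-3)] by blast
  then have "z' = z \<or> adj E z z'" using assms(2,4) unfolding adj_def by auto
  then show ?thesis using assms(5) by (auto intro: rtranclp.rtrancl_into_rtrancl)
qed

lemma not_strongly_connected_NC:
  assumes graph: "simple_graph W E"
    and "e\<^sub>1 \<in> E" "u \<in> e\<^sub>1" and "e\<^sub>2 \<in> E" "w \<in> e\<^sub>2"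
    and not_reach: "\<not> (adj E)\<^sup>*\<^sup>* u w"
  shows "\<not> strongly_connected (NC W E)"
proof
  assume sc: "strongly_connected (NC W E)"
  txt \<open>Adjacent facets come from meeting edges, so facet paths stay in the component of u.\<close>
  define reached where "reached F \<longleftrightarrow> (\<exists>e\<in>E. F = W - e \<and> (\<exists>z\<in>e. (adj E)\<^sup>*\<^sup>* u z))" for F
  have closed: "reached F'" if "(facet_adjacent (NC W E))\<^sup>*\<^sup>* F F'" "reached F" for F F'
    using that
  proof (induction rule: rtranclp_induct)
    case (step G H)
    then obtain e z where e: "e \<in> E" "G = W - e" "z \<in> e" "(adj E)\<^sup>*\<^sup>* u z"
      unfolding reached_def by blast
    obtain f where f: "f \<in> E" "H = W - f"
      using step.hyps(2) facet_NC_iff[OF graph] unfolding facet_adjacent_def by blast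
    obtain z' where "z' \<in> e" "z' \<in> f"
      using facet_adjacent_NC_edges_meet[OF graph e(1) f(1)] step.hyps(2) e(2) f(2) by blast
    then have "(adj E)\<^sup>*\<^sup>* u z'" using rtranclp_adj_edge[OF graph e(1,3)] e(4) by blast
    then show ?case unfolding reached_def using f \<open>z' \<in> f\<close> by blast
  qed
  have "(facet_adjacent (NC W E))\<^sup>*\<^sup>* (W - e\<^sub>1) (W - e\<^sub>2)"
    using sc assms(2,4) facet_NC_iff[OF graph] unfolding strongly_connected_def by blast
  moreover have "reached (W - e\<^sub>1)" unfolding reached_def using assms(2,3) by blast
  ultimately have "reached (W - e\<^sub>2)" by (rule closed)
  then obtain e z where "e \<in> E" "W - e\<^sub>2 = W - e" "z \<in> e" "(adj E)\<^sup>*\<^sup>* u z"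
    unfolding reached_def by blast
  moreover have "e \<subseteq> W" "e\<^sub>2 \<subseteq> W" using graph \<open>e \<in> E\<close> assms(4) unfolding simple_graph_def by auto
  ultimately have "z \<in> e\<^sub>2" "(adj E)\<^sup>*\<^sup>* u z" by blast+
  then show False using rtranclp_adj_edge[OF graph assms(4) _ assms(5)] not_reach by blast
qed

lemma connected_if_NC_strongly_connected:
  assumes "simple_graph V E" "no_isolated_vertices V E" "strongly_connected (NC V E)"
  shows "connected_graph V E"
  unfolding connected_graph_def
proof (intro ballI)
  fix u w assume "u \<in> V" "w \<in> V"
  then obtain e f where "e \<in> E" "u \<in> e" "f \<in> E" "w \<in> f"
    using edge_at_vertex[OF assms(2)] by metis
  then show "(adj E)\<^sup>*\<^sup>* u w" using not_strongly_connected_NC[OF assms(1)] assms(3) by blast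
qed

section \<open>Forests with three internal vertices\<close>

lemma rtranclp_imp_distinct_path:
  assumes "R\<^sup>*\<^sup>* a b"
  obtains p where "p \<noteq> []" "hd p = a" "last p = b" "distinct p"
    "\<And>i. Suc i < length p \<Longrightarrow> R (p ! i) (p ! Suc i)"
proof -
  obtain xs where "rtrancl_path R a xs b" using assms by (auto simp: rtranclp_eq_rtrancl_path)
  then obtain ys where ys: "rtrancl_path R a ys b" "distinct (a # ys)"
    by (blast elim: rtrancl_path_distinct)
  have "last (a # ys) = b"
  proof (cases "ys = []")
    case True
    then show ?thesis using ys(1) by (auto elim: rtrancl_path.cases)
  qed (simp add: rtrancl_path_last[OF ys(1)])
  moreover have "R ((a # ys) ! i) ((a # ys) ! Suc i)" if "Suc i < length (a # ys)" for i
    using rtrancl_path_nth[OF ys(1), of i] that by simp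
  ultimately show thesis using that[of "a # ys"] ys(2) by simp
qed

text \<open>A walk from y to z avoiding x, closed up through x, would be a cycle.\<close>

lemma forest_del_vertex_separates:
  assumes forest: "forest V E" and xy: "adj E x y" and xz: "adj E x z" and "y \<noteq> z"
  shows "\<not> (adj {e\<in>E. x \<notin> e})\<^sup>*\<^sup>* y z"
proof
  have G: "simple_graph V E" using forest unfolding forest_def by blast
  assume "(adj {e\<in>E. x \<notin> e})\<^sup>*\<^sup>* y z"
  then obtain p where p: "p \<noteq> []" "hd p = y" "last p = z" "distinct p"
    and step: "\<And>i. Suc i < length p \<Longrightarrow> adj {e\<in>E. x \<notin> e} (p ! i) (p ! Suc i)"
    by (blast elim: rtranclp_imp_distinct_path)
  have p0: "p ! 0 = y" using p by (simp add: hd_conv_nth)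
  have in_V: "p ! i \<in> V \<and> p ! i \<noteq> x" if "i < length p" for i
  proof (cases i)
    case 0
    then show ?thesis using p0 simple_graph_adjD[OF G xy] by simp
  next
    case (Suc k)
    then show ?thesis
      using step[of k] that adj_del_vertexD simple_graph_adjD(2)[OF G] by fastforce
  qed
  have "length p \<noteq> 1" using p \<open>y \<noteq> z\<close> by (cases p) auto
  then have "is_cycle V E (x # p)"
    unfolding is_cycle_def
  proof (intro conjI allI impI)
    show "3 \<le> length (x # p)" using \<open>length p \<noteq> 1\<close> p(1) by (cases p) (auto simp: Suc_le_eq)
    show "distinct (x # p)" using p(4) in_V by (auto simp: in_set_conv_nth)
    show "set (x # p) \<subseteq> V" using in_V simple_graph_adjD[OF G xy] by (auto simp: in_set_conv_nth)
    show "adj E (last (x # p)) (hd (x # p))" using p(1,3) adj_sym[OF xz] by simp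
    fix i assume "i < length (x # p) - 1"
    then show "adj E ((x # p) ! i) ((x # p) ! (i + 1))"
    proof (cases i)
      case (Suc k)
      then show ?thesis using \<open>i < length (x # p) - 1\<close> adj_del_vertexD[OF step[of k]] by simp
    qed (use xy p0 in simp)
  qed
  then show False using forest unfolding forest_def by blast
qed

definition two_internal_neighbours :: "'a set \<Rightarrow> 'a set set \<Rightarrow> 'a \<Rightarrow> bool" where
  "two_internal_neighbours V E x \<longleftrightarrow>
     (\<exists>y z. adj E x y \<and> adj E x z \<and> y \<noteq> z \<and>
       y \<in> internal_vertices V E \<and> z \<in> internal_vertices V E)"

lemma adj_or_two_internal_neighbours:
  assumes G: "simple_graph V E" and walk: "(adj E)\<^sup>*\<^sup>* a b"
    and a: "a \<in> internal_vertices V E" and b: "b \<in> internal_vertices V E" and "a \<noteq> b"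
  shows "adj E a b \<or> (\<exists>x. two_internal_neighbours V E x)"
proof -
  obtain p where p: "p \<noteq> []" "hd p = a" "last p = b" "distinct p"
    and step: "\<And>i. Suc i < length p \<Longrightarrow> adj E (p ! i) (p ! Suc i)"
    using walk by (blast elim: rtranclp_imp_distinct_path)
  have p0: "p ! 0 = a" using p by (simp add: hd_conv_nth)
  have last_p: "p ! (length p - 1) = b" using p by (simp add: last_conv_nth)
  have nth_ne: "p ! i \<noteq> p ! j" if "i < length p" "j < length p" "i \<noteq> j" for i j
    using p(4) that by (simp add: nth_eq_iff_index_eq)
  have "length p \<noteq> 1" using p \<open>a \<noteq> b\<close> by (cases p) auto
  moreover have "length p \<noteq> 0" using p(1) by simp
  ultimately consider "length p = 2" | "length p \<ge> 3" by linarith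
  then show ?thesis
  proof cases
    case 1
    then show ?thesis using step[of 0] p0 last_p by simp
  next
    case 2
    have "p ! 2 \<in> internal_vertices V E"
    proof (cases "length p = 3")
      case True
      then show ?thesis using last_p b by simp
    next
      case False
      then have "adj E (p ! 2) (p ! 1)" "adj E (p ! 2) (p ! 3)" "p ! 1 \<noteq> p ! 3"
        using 2 False step[of 1] step[of 2] adj_sym nth_ne[of 1 3] p(1)
        by (auto simp: numeral_eq_Suc Suc_le_eq)
      then show ?thesis
        using simple_graph_adjD(1)[OF G] internal_vertices_iff[OF G] by blast
    qed
    moreover have "adj E (p ! 1) (p ! 0)" "adj E (p ! 1) (p ! 2)" "p ! 0 \<noteq> p ! 2"
      using 2 step[of 0] step[of 1] adj_sym nth_ne[of 0 2] p(1) by (auto simp: numeral_eq_Suc Suc_le_eq)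
    ultimately show ?thesis using a p0 unfolding two_internal_neighbours_def by metis
  qed
qed

lemma two_internal_neighbours_if_card_internal_gt_2:
  assumes G: "simple_graph V E" and conn: "connected_graph V E"
    and three: "2 < card (internal_vertices V E)"
  shows "\<exists>x. two_internal_neighbours V E x"
proof -
  obtain a b c where abc: "a \<in> internal_vertices V E" "b \<in> internal_vertices V E"
    "c \<in> internal_vertices V E" "a \<noteq> b" "b \<noteq> c" "a \<noteq> c"
    using three by (auto simp: numeral_eq_Suc card_le_Suc_iff Suc_le_eq[symmetric])
  then have "(adj E)\<^sup>*\<^sup>* a b" "(adj E)\<^sup>*\<^sup>* b c"
    using conn unfolding connected_graph_def internal_vertices_def by auto
  then have "adj E b a \<and> adj E b c \<or> (\<exists>x. two_internal_neighbours V E x)"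
    using adj_or_two_internal_neighbours[OF G] abc adj_sym by metis
  then show ?thesis using abc unfolding two_internal_neighbours_def by blast
qed

lemma edge_avoiding_at_internal:
  assumes G: "simple_graph V E" and "y \<in> internal_vertices V E" "x \<noteq> y"
  obtains f where "f \<in> E" "y \<in> f" "x \<notin> f"
proof -
  obtain u w where "u \<noteq> w" "adj E y u" "adj E y w"
    using assms(2) internal_vertices_iff[OF G] by blast
  then have "{y, u} \<in> E \<and> x \<notin> {y, u} \<or> {y, w} \<in> E \<and> x \<notin> {y, w}"
    using \<open>x \<noteq> y\<close> unfolding adj_def by auto
  then show thesis using that by blast
qed

lemma card_internal_le_2_if_links_strongly_connected:
  assumes forest: "forest V E" and conn: "connected_graph V E"
    and lk_sc: "\<And>x. strongly_connected (lk x (NC V E))"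
  shows "card (internal_vertices V E) \<le> 2"
proof (rule ccontr)
  have G: "simple_graph V E" using forest unfolding forest_def by blast
  assume "\<not> card (internal_vertices V E) \<le> 2"
  then obtain x y z where xyz: "adj E x y" "adj E x z" "y \<noteq> z"
    "y \<in> internal_vertices V E" "z \<in> internal_vertices V E"
    using two_internal_neighbours_if_card_internal_gt_2[OF G conn]
    unfolding two_internal_neighbours_def by auto
  note x_ne = simple_graph_adjD(3)[OF G xyz(1)] simple_graph_adjD(3)[OF G xyz(2)]
  obtain f\<^sub>1 where "f\<^sub>1 \<in> E" "y \<in> f\<^sub>1" "x \<notin> f\<^sub>1"
    using edge_avoiding_at_internal[OF G xyz(4) x_ne(1)] .
  moreover obtain f\<^sub>2 where "f\<^sub>2 \<in> E" "z \<in> f\<^sub>2" "x \<notin> f\<^sub>2"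
    using edge_avoiding_at_internal[OF G xyz(5) x_ne(2)] .
  ultimately have "\<not> strongly_connected (NC (V - {x}) {e\<in>E. x \<notin> e})"
    using not_strongly_connected_NC[OF simple_graph_del_vertex[OF G]]
      forest_del_vertex_separates[OF forest xyz(1-3)] by blast
  moreover have "x \<in> V" using simple_graph_adjD(1)[OF G xyz(1)] .
  ultimately show False using lk_sc[of x] lk_NC by metis
qed

section \<open>Non-cover complexes of double stars are vertex decomposable\<close>

lemma vertex_decomposable_NC_singletons:
  assumes "finite P" "P \<noteq> {}" "finite W" "P \<subseteq> W"
  shows "vertex_decomposable (NC W ((\<lambda>p. {p}) ` P))"
  using assms
proof (induction P arbitrary: W rule: finite_ne_induct)
  case (singleton p)
  then show ?case using NC_single_edge[of "{p}" W] vertex_decomposable.simplex[of "W - {p}"] by simp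
next
  case (insert p P)
  let ?K = "NC W ((\<lambda>p. {p}) ` insert p P)"
  obtain q where "q \<in> P" using insert.hyps(2) by blast
  then have vertex: "{p} \<in> ?K"
    using insert.prems insert.hyps(3) unfolding non_cover_complex_def by auto
  have "{e \<in> (\<lambda>p. {p}) ` insert p P. p \<notin> e} = (\<lambda>p. {p}) ` P" using insert.hyps(3) by auto
  then have "lk p ?K = NC (W - {p}) ((\<lambda>p. {p}) ` P)" using lk_NC[of p W] insert.prems by simp
  moreover have "P \<subseteq> W - {p}" using insert.prems insert.hyps(3) by blast
  ultimately have lk: "vertex_decomposable (lk p ?K)"
    using insert.IH[of "W - {p}"] insert.prems by simp
  have del: "del p ?K = Pow (W - {p})"
    using insert.prems unfolding del_def non_cover_complex_def by auto
  then have "vertex_decomposable (del p ?K)"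
    using vertex_decomposable.simplex[of "W - {p}"] insert.prems by simp
  moreover have "shedding ?K p"
  proof (rule shedding_if_no_cone[OF down_closed_NC])
    fix F assume "facet F (del p ?K)"
    then have "insert p F = W" using del insert.prems by (auto simp: facet_Pow_iff)
    then show "insert p F \<notin> ?K" unfolding non_cover_complex_def by auto
  qed
  ultimately show ?case using vertex_decomposableI[OF vertex lk] by blast
qed

lemma vertex_decomposable_NC_star:
  assumes "finite E" "E \<noteq> {}" "finite W" "c \<in> W" "\<forall>e\<in>E. \<exists>l\<in>W. l \<noteq> c \<and> e = {c, l}"
  shows "vertex_decomposable (NC W E)"
  using assms
proof (induction E arbitrary: W rule: finite_ne_induct)
  case (singleton e)
  then show ?case using NC_single_edge[of e W] vertex_decomposable.simplex[of "W - e"] by auto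
next
  case (insert e E)
  let ?K = "NC W (insert e E)"
  have leaf: "\<exists>m\<in>W. m \<noteq> c \<and> f = {c, m}" if "f \<in> insert e E" for f
    using insert.prems(3) that by blast
  obtain l where l: "l \<in> W" "l \<noteq> c" "e = {c, l}" using leaf[of e] by blast
  have l_notin: "l \<notin> f" if "f \<in> E" for f
    using leaf[of f] that l insert.hyps(3) by auto
  obtain e' where "e' \<in> E" using insert.hyps(2) by blast
  then obtain m where "m \<in> W" "e' = {c, m}" using leaf[of e'] by blast
  then have "e' \<subseteq> W - {l}" using l_notin[OF \<open>e' \<in> E\<close>] insert.prems(2) by blast
  then have vertex: "{l} \<in> ?K" using l(1) \<open>e' \<in> E\<close> unfolding non_cover_complex_def by blast
  have "{f \<in> insert e E. l \<notin> f} = E" using l_notin l by auto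
  then have "lk l ?K = NC (W - {l}) E" using lk_NC[OF l(1)] by simp
  moreover have "\<exists>m\<in>W - {l}. m \<noteq> c \<and> f = {c, m}" if "f \<in> E" for f
    using leaf[of f] l_notin[of f] that by blast
  ultimately have lk: "vertex_decomposable (lk l ?K)"
    using insert.IH[of "W - {l}"] insert.prems l by simp
  have del: "del l ?K = Pow (W - {l, c})"
    using leaf l insert.prems(2) unfolding del_def non_cover_complex_def by fastforce
  then have "vertex_decomposable (del l ?K)"
    using vertex_decomposable.simplex[of "W - {l, c}"] insert.prems by simp
  moreover have "shedding ?K l"
  proof (rule shedding_if_no_cone[OF down_closed_NC])
    fix F assume "facet F (del l ?K)"
    then have "insert l F = W - {c}" using del l by (auto simp: facet_Pow_iff)
    then show "insert l F \<notin> ?K" using leaf unfolding non_cover_complex_def by fastforce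
  qed
  ultimately show ?case using vertex_decomposableI[OF vertex lk] by blast
qed

lemma del_NC_double_star:
  assumes G: "simple_graph W E" and ab: "adj E a b" and cover: "\<And>e. e \<in> E \<Longrightarrow> a \<in> e \<or> b \<in> e"
  shows "del a (NC W E) = NC (W - {a}) ((\<lambda>p. {p}) ` {p. adj E a p})"
proof (intro set_eqI iffI)
  note abW = simple_graph_adjD[OF G ab]
  fix S assume "S \<in> del a (NC W E)"
  then obtain e where S: "S \<subseteq> W" "a \<notin> S" "e \<in> E" "e \<subseteq> W - S"
    unfolding del_def non_cover_complex_def by blast
  have "\<exists>p. adj E a p \<and> p \<in> W - {a} - S"
  proof (cases "a \<in> e")
    case True
    then obtain l where "l \<noteq> a" "e = {a, l}" using simple_graph_edge_eq[OF G S(3)] by blast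
    then show ?thesis using S unfolding adj_def by auto
  next
    case False
    then show ?thesis using cover[OF S(3)] ab abW S by auto
  qed
  then show "S \<in> NC (W - {a}) ((\<lambda>p. {p}) ` {p. adj E a p})"
    unfolding non_cover_complex_def using S by auto
next
  fix S assume "S \<in> NC (W - {a}) ((\<lambda>p. {p}) ` {p. adj E a p})"
  then obtain p where "S \<subseteq> W - {a}" "adj E a p" "p \<in> W - {a} - S"
    unfolding non_cover_complex_def by auto
  then have "{a, p} \<in> E" "{a, p} \<subseteq> W - S" "S \<subseteq> W" "a \<notin> S"
    using simple_graph_adjD[OF G] unfolding adj_def by auto
  then show "S \<in> del a (NC W E)" unfolding del_def non_cover_complex_def by blast
qed

lemma vertex_decomposable_NC_double_star:
  assumes G: "simple_graph W E" and ab: "adj E a b"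
    and cover: "\<And>e. e \<in> E \<Longrightarrow> a \<in> e \<or> b \<in> e" and f: "f \<in> E" "a \<notin> f"
  shows "vertex_decomposable (NC W E)"
proof -
  let ?K = "NC W E" and ?P = "{p. adj E a p}"
  note abW = simple_graph_adjD[OF G ab]
  have edge_at_b: "\<exists>l\<in>W - {a}. l \<noteq> b \<and> e = {b, l}" if "e \<in> E" "a \<notin> e" for e
    using simple_graph_edge_eq[OF G that(1)] cover[OF that(1)] that(2) by (metis DiffI insertCI singletonD)
  have "f \<subseteq> W" using G f unfolding simple_graph_def by blast
  then have vertex: "{a} \<in> ?K" using f abW unfolding non_cover_complex_def by blast
  have "vertex_decomposable (NC (W - {a}) {e\<in>E. a \<notin> e})"
  proof (rule vertex_decomposable_NC_star[where c = b])
    show "finite {e\<in>E. a \<notin> e}" using simple_graph_finite_edges[OF G] by simp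
    show "finite (W - {a})" using G unfolding simple_graph_def by simp
  qed (use f abW edge_at_b in auto)
  then have lk: "vertex_decomposable (lk a ?K)" using lk_NC[OF abW(1)] by simp
  have P: "?P \<subseteq> W - {a}" "?P \<noteq> {}" "finite (W - {a})"
    using simple_graph_adjD[OF G] ab G unfolding simple_graph_def by blast+
  then have "finite ?P" using finite_subset by blast
  then have "vertex_decomposable (del a ?K)"
    using vertex_decomposable_NC_singletons[OF _ P(2,3,1)] del_NC_double_star[OF G ab cover] by simp
  moreover have "shedding ?K a"
  proof (rule shedding_if_no_cone[OF down_closed_NC])
    fix F assume F: "facet F (del a ?K)"
    then have FW: "F \<subseteq> W" "a \<notin> F" unfolding facet_def del_def non_cover_complex_def by auto
    txt \<open>An edge {b, y} missing insert a F would let F grow by y while still missing {a, b}.\<close>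
    show "insert a F \<notin> ?K"
    proof
      assume "insert a F \<in> ?K"
      then obtain e where e: "e \<in> E" "e \<subseteq> W - insert a F" unfolding non_cover_complex_def by blast
      then obtain y where y: "y \<in> W - {a}" "y \<noteq> b" "e = {b, y}" using edge_at_b by blast
      then have "y \<notin> F" "b \<notin> F" using e by auto
      then have "{a, b} \<subseteq> W - insert y F" "insert y F \<subseteq> W" using FW y abW by auto
      then have "insert y F \<in> ?K" using ab unfolding non_cover_complex_def adj_def by blast
      then have "insert y F \<in> del a ?K" "F \<subset> insert y F"
        using y FW \<open>y \<notin> F\<close> unfolding del_def by auto
      then show False using F unfolding facet_def by blast
    qed
  qed
  ultimately show ?thesis using vertex_decomposableI[OF vertex lk] by blast
qed

section \<open>Connected graphs with at most two internal vertices\<close>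

lemma edge_without_internal_vertex_spans:
  assumes G: "simple_graph V E" and conn: "connected_graph V E"
    and "e \<in> E" "e \<inter> internal_vertices V E = {}"
  shows "e = V"
proof -
  obtain p q where pq: "e = {p, q}" "p \<noteq> q"
    using assms(3) G unfolding simple_graph_def by (auto simp: card_2_iff)
  then have "adj E p q" using assms(3) unfolding adj_def by simp
  note pqV = simple_graph_adjD(1,2)[OF G this]
  have closed: "s \<in> e" if "t \<in> e" "adj E t s" for t s
  proof (rule ccontr)
    assume "s \<notin> e"
    then have "t \<in> internal_vertices V E"
      using that pq \<open>adj E p q\<close> adj_sym internal_vertices_iff[OF G] pqV by (metis insert_iff singletonD)
    then show False using that(1) assms(4) by blast
  qed
  have "w \<in> e" if "w \<in> V" for w
  proof -
    have "(adj E)\<^sup>*\<^sup>* p w" using conn pqV that unfolding connected_graph_def by blast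
    then show ?thesis using closed by (induction rule: rtranclp_induct) (auto simp: pq)
  qed
  moreover have "e \<subseteq> V" using pq pqV by simp
  ultimately show ?thesis by blast
qed

lemma adj_if_internal_vertices_pair:
  assumes G: "simple_graph V E" and conn: "connected_graph V E"
    and I: "internal_vertices V E = {a, b}" "a \<noteq> b"
  shows "adj E a b"
proof (rule ccontr)
  assume not_adj: "\<not> adj E a b"
  let ?S = "insert a {t. adj E a t}"
  have closed: "s \<in> ?S" if "t \<in> ?S" "adj E t s" for t s
  proof (cases "t = a")
    case False
    show ?thesis
    proof (rule ccontr)
      assume "s \<notin> ?S"
      then have "adj E t a" "adj E t s" "a \<noteq> s" using that False adj_sym by auto
      then have "t \<in> internal_vertices V E"
        using internal_vertices_iff[OF G] simple_graph_adjD(1)[OF G] by blast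
      then show False using I False not_adj that(1) by auto
    qed
  qed (use that in simp)
  have "a \<in> V" "b \<in> V" using I unfolding internal_vertices_def by auto
  then have "(adj E)\<^sup>*\<^sup>* a b" using conn unfolding connected_graph_def by blast
  then have "b \<in> ?S" using closed by (induction rule: rtranclp_induct) auto
  then show False using not_adj I(2) by simp
qed

lemma vertex_decomposable_NC_if_internal_le_2:
  assumes G: "simple_graph V E" and "V \<noteq> {}" "no_isolated_vertices V E"
    and conn: "connected_graph V E" and "card (internal_vertices V E) \<le> 2"
  shows "vertex_decomposable (NC V E)"
proof -
  let ?I = "internal_vertices V E"
  have finV: "finite V" and finE: "finite E" and finI: "finite ?I"
    using G simple_graph_finite_edges unfolding simple_graph_def internal_vertices_def by auto
  obtain v where "v \<in> V" using assms(2) by blast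
  then obtain e\<^sub>0 where "e\<^sub>0 \<in> E" using edge_at_vertex[OF assms(3)] by blast
  have meets: "e \<inter> ?I \<noteq> {} \<or> e = V" if "e \<in> E" for e
    using edge_without_internal_vertex_spans[OF G conn that] by blast
  have "card ?I = 0 \<or> card ?I = 1 \<or> card ?I = 2" using assms(5) by linarith
  then consider "?I = {}" | c where "?I = {c}" | a b where "?I = {a, b}" "a \<noteq> b"
    using finI by (auto simp: card_1_singleton_iff card_2_iff)
  then show ?thesis
  proof cases
    case 1
    then have "e = V" if "e \<in> E" for e using meets that by blast
    then have "E = {e\<^sub>0}" "e\<^sub>0 \<subseteq> V" using \<open>e\<^sub>0 \<in> E\<close> by auto
    then show ?thesis using NC_single_edge[of e\<^sub>0 V] vertex_decomposable.simplex[of "V - e\<^sub>0"] finV by simp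
  next
    case (2 c)
    then have "c \<in> V" unfolding internal_vertices_def by blast
    then have c: "c \<in> e" if "e \<in> E" for e using meets[OF that] 2 by auto
    have "\<exists>l\<in>V. l \<noteq> c \<and> e = {c, l}" if "e \<in> E" for e
      using simple_graph_edge_eq[OF G that c[OF that]] by blast
    then show ?thesis
      by (intro vertex_decomposable_NC_star[OF finE _ finV \<open>c \<in> V\<close>]) (use \<open>e\<^sub>0 \<in> E\<close> in auto)
  next
    case (3 a b)
    then have "a \<in> V" unfolding internal_vertices_def by blast
    then have "a \<in> e \<or> b \<in> e" if "e \<in> E" for e using meets[OF that] 3 by auto
    moreover obtain f where "f \<in> E" "a \<notin> f"
      using edge_avoiding_at_internal[OF G, of b a] 3 by blast
    ultimately show ?thesis
      using vertex_decomposable_NC_double_star[OF G adj_if_internal_vertices_pair[OF G conn 3]]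
      by blast
  qed
qed

theorem theorem4p5:
  fixes V :: "'a set" and E :: "'a set set"
  assumes "forest V E"
    and "V \<noteq> {}"
    and "no_isolated_vertices V E"
  shows "vertex_decomposable (non_cover_complex V E) \<longleftrightarrow>
           connected_graph V E \<and> card (internal_vertices V E) \<le> 2"
proof
  have G: "simple_graph V E" using assms(1) unfolding forest_def by blast
  assume "vertex_decomposable (NC V E)"
  then have "strongly_connected (NC V E)" "\<And>x. strongly_connected (lk x (NC V E))"
    using strongly_connected_if_vertex_decomposable[OF _ finite_NC down_closed_NC pure_NC[OF G]] G
    unfolding simple_graph_def by blast+
  then show "connected_graph V E \<and> card (internal_vertices V E) \<le> 2"
    using connected_if_NC_strongly_connected[OF G assms(3)]
      card_internal_le_2_if_links_strongly_connected[OF assms(1)] by blast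
next
  assume "connected_graph V E \<and> card (internal_vertices V E) \<le> 2"
  then show "vertex_decomposable (NC V E)"
    using vertex_decomposable_NC_if_internal_le_2 assms unfolding forest_def by blast
qed

end
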